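(* Let $1<\alpha<2$, $w>0$ and $p,q\in\mathcal{P}_{\alpha,w}$. Then $$d_\alpha(T[p],T[q])\le \frac{2}{\alpha+1}\,d_\alpha(p,q).$$
   Context: For $\alpha\ge 1$ and $w>0$, $\mathcal{P}_{\alpha,w}$ is the set of probability densities $p$ on $[0,\infty)$ with $\int_0^\infty x\,p(x)\,dx=w$ and $\int_0^\infty x^\alpha p(x)\,dx<\infty$. For $p,q\in\mathcal{P}_{\alpha,w}$, $d_\alpha(p,q)=\sup_{s>0}\frac{|\mathcal{L}[p](s)-\mathcal{L}[q](s)|}{s^\alpha}$, where $\mathcal{L}[p](s)=\int_0^\infty e^{-sx}p(x)\,dx$ is the Laplace transform. For a probability density $p$ on $[0,\infty)$, $S[p](x)=\int_x^\infty \frac{p(u)}{u}\,du$ and $T[p](x)=\int_0^x S[p](x-v)\,S[p](v)\,dv$ for $x\ge0$. *)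

theory Defs
  imports "HOL-Analysis.Analysis"
begin

text \<open>Probability densities on [0,infinity) are represented by functions real => real;
  only their values on {0..} matter.\<close>

definition prob_density_nonneg :: "(real \<Rightarrow> real) \<Rightarrow> bool" where
  "prob_density_nonneg p \<longleftrightarrow>
     p \<in> borel_measurable lborel \<and>
     (\<forall>x\<ge>0. 0 \<le> p x) \<and>
     set_integrable lborel {0..} p \<and>
     (\<integral>x\<in>{0..}. p x \<partial>lborel) = 1"

definition P_class :: "real \<Rightarrow> real \<Rightarrow> (real \<Rightarrow> real) set" where
  "P_class \<alpha> w = {p. prob_density_nonneg p \<and>
       set_integrable lborel {0..} (\<lambda>x. x * p x) \<and>
       (\<integral>x\<in>{0..}. x * p x \<partial>lborel) = w \<and>
       (\<integral>\<^sup>+x\<in>{0..}. ennreal (x powr \<alpha> * p x) \<partial>lborel) < \<infinity>}"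

definition laplace :: "(real \<Rightarrow> real) \<Rightarrow> real \<Rightarrow> real" where
  "laplace p s = (\<integral>x\<in>{0..}. exp (- s * x) * p x \<partial>lborel)"

definition d_alpha :: "real \<Rightarrow> (real \<Rightarrow> real) \<Rightarrow> (real \<Rightarrow> real) \<Rightarrow> ereal" where
  "d_alpha \<alpha> p q = (SUP s\<in>{0<..}. ereal (\<bar>laplace p s - laplace q s\<bar> / s powr \<alpha>))"

definition S_op :: "(real \<Rightarrow> real) \<Rightarrow> real \<Rightarrow> real" where
  "S_op p x = (\<integral>u\<in>{x..}. p u / u \<partial>lborel)"

definition T_op :: "(real \<Rightarrow> real) \<Rightarrow> real \<Rightarrow> real" where
  "T_op p x = (\<integral>v\<in>{0..x}. S_op p (x - v) * S_op p v \<partial>lborel)"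

end

theory Submission
  imports Defs
begin

text \<open>
  By Fubini, \<open>\<Phi>\<^sub>p(s) := L[S[p]](s) = \<integral> p(u) (1 - e\<^sup>-\<^sup>s\<^sup>u)/(s u) du = (1/s) \<integral>\<^sub>0\<^sup>s L[p](t) dt\<close>,
  so \<open>0 \<le> \<Phi>\<^sub>p \<le> 1\<close>, and the convolution theorem gives \<open>L[T[p]] = \<Phi>\<^sub>p\<^sup>2\<close>.
  With \<open>d = d\<^sub>\<alpha>(p,q)\<close> this yields \<open>|\<Phi>\<^sub>p(s) - \<Phi>\<^sub>q(s)| \<le> (1/s) \<integral>\<^sub>0\<^sup>s d t\<^sup>\<alpha> dt = d s\<^sup>\<alpha>/(\<alpha>+1)\<close>,
  and \<open>|\<Phi>\<^sub>p\<^sup>2 - \<Phi>\<^sub>q\<^sup>2| \<le> 2 |\<Phi>\<^sub>p - \<Phi>\<^sub>q|\<close>.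
\<close>

lemma prob_density_nonnegD:
  assumes "prob_density_nonneg p"
  shows prob_density_nonneg_measurable: "p \<in> borel_measurable borel"
    and prob_density_nonneg_nonneg: "\<And>x. 0 \<le> x \<Longrightarrow> 0 \<le> p x"
    and prob_density_nonneg_nn_integral: "(\<integral>\<^sup>+ x. ennreal (indicator {0..} x * p x) \<partial>lborel) = 1"
proof -
  from assms show "p \<in> borel_measurable borel" and nonneg: "\<And>x. 0 \<le> x \<Longrightarrow> 0 \<le> p x"
    by (auto simp: prob_density_nonneg_def)
  from assms have "integrable lborel (\<lambda>x. indicator {0..} x * p x)"
    and "(\<integral>x. indicator {0..} x * p x \<partial>lborel) = 1"
    by (auto simp: prob_density_nonneg_def set_integrable_def set_lebesgue_integral_def)
  then show "(\<integral>\<^sup>+ x. ennreal (indicator {0..} x * p x) \<partial>lborel) = 1"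
    using nonneg by (subst nn_integral_eq_integral) (auto split: split_indicator)
qed

lemma nn_integral_exp_atLeastAtMost:
  assumes "0 < s" "0 \<le> u"
  shows "(\<integral>\<^sup>+ y. ennreal (indicator {0..u} y * exp (- s * y)) \<partial>lborel) = ennreal ((1 - exp (- s * u)) / s)"
proof -
  have "((\<lambda>y. - exp (- s * y) / s) has_vector_derivative exp (- s * y)) (at y)" for y
    unfolding has_real_derivative_iff_has_vector_derivative[symmetric]
    using assms by (auto intro!: derivative_eq_intros simp: field_simps)
  then have "((\<lambda>y. exp (- s * y)) has_integral ((- exp (- s * u) / s) - (- exp (- s * 0) / s))) {0..u}"
    by (intro fundamental_theorem_of_calculus_interior[OF assms(2)])
       (use assms in \<open>auto intro!: continuous_intros\<close>)
  then have "((\<lambda>y. exp (- s * y)) has_integral ((1 - exp (- s * u)) / s)) {0..u}"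
    by (simp add: diff_divide_distrib)
  then show ?thesis
    by (subst nn_integral_has_integral_lebesgue) auto
qed

lemma integral_powr_atLeastAtMost:
  fixes a s :: real
  assumes "0 < a" "0 \<le> s"
  shows integrable_powr_atLeastAtMost: "integrable lborel (\<lambda>t. indicator {0..s} t * t powr a)"
    and "(\<integral>t. indicator {0..s} t * t powr a \<partial>lborel) = s powr (a + 1) / (a + 1)"
proof -
  have "continuous_on {0..s} (\<lambda>t. t powr a)"
    using assms by (intro continuous_on_powr') (auto intro: continuous_intros)
  then have si: "set_integrable lborel {0..s} (\<lambda>t. t powr a)"
    by (rule borel_integrable_atLeastAtMost')
  then show "integrable lborel (\<lambda>t. indicator {0..s} t * t powr a)"
    by (simp add: set_integrable_def)
  have "(LINT t : {0..s} | lborel. t powr a) = integral {0..s} (\<lambda>t. t powr a)"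
    by (rule set_borel_integral_eq_integral(2)[OF si])
  also have "\<dots> = s powr (a + 1) / (a + 1)"
    using assms by (intro integral_unique has_integral_powr_from_0) auto
  finally show "(\<integral>t. indicator {0..s} t * t powr a \<partial>lborel) = s powr (a + 1) / (a + 1)"
    by (simp add: set_lebesgue_integral_def)
qed

lemma laplace_eq_nn_integral:
  assumes [measurable]: "f \<in> borel_measurable borel" and "\<And>x. 0 \<le> x \<Longrightarrow> 0 \<le> f x"
  shows "laplace f t = enn2real (\<integral>\<^sup>+ u. ennreal (indicator {0..} u * (exp (- t * u) * f u)) \<partial>lborel)"
  unfolding laplace_def set_lebesgue_integral_def
  by (simp, rule integral_eq_nn_integral) (use assms(2) in \<open>auto split: split_indicator\<close>)

lemma nn_laplace_le_1:
  assumes "prob_density_nonneg p" "0 \<le> t"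
  shows "(\<integral>\<^sup>+ u. ennreal (indicator {0..} u * (exp (- t * u) * p u)) \<partial>lborel) \<le> 1"
proof -
  note [measurable] = prob_density_nonneg_measurable[OF assms(1)]
  note nonneg = prob_density_nonneg_nonneg[OF assms(1)]
  have "(\<integral>\<^sup>+ u. ennreal (indicator {0..} u * (exp (- t * u) * p u)) \<partial>lborel)
     \<le> (\<integral>\<^sup>+ u. ennreal (indicator {0..} u * p u) \<partial>lborel)"
  proof (intro nn_integral_mono ennreal_leI)
    fix u :: real
    have "0 \<le> u \<Longrightarrow> exp (- t * u) * p u \<le> 1 * p u"
      using assms(2) nonneg[of u] by (intro mult_right_mono) auto
    then show "indicator {0..} u * (exp (- t * u) * p u) \<le> indicator {0..} u * p u"
      by (simp split: split_indicator)
  qed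
  also have "\<dots> = 1"
    by (rule prob_density_nonneg_nn_integral[OF assms(1)])
  finally show ?thesis .
qed

lemma laplace_nonneg:
  assumes "f \<in> borel_measurable borel" and "\<And>x. 0 \<le> x \<Longrightarrow> 0 \<le> f x"
  shows "0 \<le> laplace f t"
  using laplace_eq_nn_integral[OF assms] by simp

lemma laplace_at_0:
  assumes "prob_density_nonneg p"
  shows "laplace p 0 = 1"
  using laplace_eq_nn_integral[OF prob_density_nonnegD(1,2)[OF assms]]
    prob_density_nonneg_nn_integral[OF assms] by simp

lemma S_op_eq_nn_integral:
  assumes [measurable]: "p \<in> borel_measurable borel" and "\<And>x. 0 \<le> x \<Longrightarrow> 0 \<le> p x" and "0 \<le> y"
  shows "S_op p y = enn2real (\<integral>\<^sup>+ u. ennreal (if y \<le> u then p u / u else 0) \<partial>lborel)"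
proof -
  have "S_op p y = (\<integral>u. (if y \<le> u then p u / u else 0) \<partial>lborel)"
    by (auto simp: S_op_def set_lebesgue_integral_def intro!: Bochner_Integration.integral_cong
        split: split_indicator)
  also have "\<dots> = enn2real (\<integral>\<^sup>+ u. ennreal (if y \<le> u then p u / u else 0) \<partial>lborel)"
    using assms(2,3) by (intro integral_eq_nn_integral) auto
  finally show ?thesis .
qed

lemma S_op_nonneg:
  assumes "prob_density_nonneg p" "0 \<le> y"
  shows "0 \<le> S_op p y"
  using S_op_eq_nn_integral[OF prob_density_nonnegD(1,2)[OF assms(1)] assms(2)] by simp

lemma nn_integral_S_op_le:
  assumes "prob_density_nonneg p" "0 < y"
  shows "(\<integral>\<^sup>+ u. ennreal (if y \<le> u then p u / u else 0) \<partial>lborel) \<le> ennreal (1 / y)"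
proof -
  note [measurable] = prob_density_nonneg_measurable[OF assms(1)]
  note nonneg = prob_density_nonneg_nonneg[OF assms(1)]
  have "(\<integral>\<^sup>+ u. ennreal (if y \<le> u then p u / u else 0) \<partial>lborel)
     \<le> (\<integral>\<^sup>+ u. ennreal (1 / y) * ennreal (indicator {0..} u * p u) \<partial>lborel)"
  proof (intro nn_integral_mono)
    fix u
    have "y \<le> u \<Longrightarrow> p u / u \<le> 1 / y * (indicator {0..} u * p u)"
      using assms(2) nonneg[of u] by (auto simp: divide_simps mult_left_mono)
    then show "ennreal (if y \<le> u then p u / u else 0) \<le> ennreal (1 / y) * ennreal (indicator {0..} u * p u)"
      using assms(2) by (auto simp: ennreal_mult'[symmetric] intro: ennreal_leI)
  qed
  also have "\<dots> = ennreal (1 / y)"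
    by (simp add: nn_integral_cmult prob_density_nonneg_nn_integral[OF assms(1)])
  finally show ?thesis .
qed

lemma S_op_measurable [measurable]:
  assumes [measurable]: "p \<in> borel_measurable borel"
  shows "S_op p \<in> borel_measurable borel"
proof -
  have "S_op p = (\<lambda>y. \<integral>u. (if y \<le> u then p u / u else 0) \<partial>lborel)"
    by (auto simp: S_op_def set_lebesgue_integral_def fun_eq_iff
        intro!: Bochner_Integration.integral_cong split: split_indicator)
  then show ?thesis
    by simp
qed

lemma T_op_measurable [measurable]:
  assumes [measurable]: "p \<in> borel_measurable borel"
  shows "T_op p \<in> borel_measurable borel"
proof -
  have "T_op p = (\<lambda>x. \<integral>v. (if 0 \<le> v \<and> v \<le> x then S_op p (x - v) * S_op p v else 0) \<partial>lborel)"
    by (auto simp: T_op_def set_lebesgue_integral_def fun_eq_iff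
        intro!: Bochner_Integration.integral_cong split: split_indicator)
  then show ?thesis
    by simp
qed

lemma nn_laplace_convolution:
  fixes f g :: "real \<Rightarrow> real"
  assumes [measurable]: "f \<in> borel_measurable borel" "g \<in> borel_measurable borel"
    and f_nonneg: "\<And>y. 0 \<le> y \<Longrightarrow> 0 \<le> f y" and g_nonneg: "\<And>y. 0 \<le> y \<Longrightarrow> 0 \<le> g y"
  shows "(\<integral>\<^sup>+ x. ennreal (indicator {0..} x * exp (- s * x)) *
            (\<integral>\<^sup>+ v. ennreal (if 0 \<le> v \<and> v \<le> x then f (x - v) * g v else 0) \<partial>lborel) \<partial>lborel)
       = (\<integral>\<^sup>+ y. ennreal (indicator {0..} y * (exp (- s * y) * f y)) \<partial>lborel) *
         (\<integral>\<^sup>+ y. ennreal (indicator {0..} y * (exp (- s * y) * g y)) \<partial>lborel)"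
    (is "?lhs = ?F * ?G")
proof -
  define h where "h v x = ennreal (if 0 \<le> v \<and> v \<le> x then
      (exp (- s * (x - v)) * f (x - v)) * (exp (- s * v) * g v) else 0)" for v x
  have [measurable]: "case_prod h \<in> borel_measurable (borel \<Otimes>\<^sub>M borel)"
    unfolding h_def by measurable
  have "?lhs = (\<integral>\<^sup>+ x. \<integral>\<^sup>+ v. h v x \<partial>lborel \<partial>lborel)"
  proof (intro nn_integral_cong)
    fix x :: real
    have "ennreal (indicator {0..} x * exp (- s * x)) *
        ennreal (if 0 \<le> v \<and> v \<le> x then f (x - v) * g v else 0) = h v x" for v
    proof (cases "0 \<le> v \<and> v \<le> x")
      case True
      have "exp (- s * x) = exp (- s * (x - v)) * exp (- s * v)"
        by (simp add: exp_add[symmetric] algebra_simps)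
      with True show ?thesis
        using f_nonneg[of "x - v"] g_nonneg[of v] by (simp add: h_def ennreal_mult'[symmetric] mult_ac)
    qed (auto simp: h_def)
    then show "ennreal (indicator {0..} x * exp (- s * x)) *
        (\<integral>\<^sup>+ v. ennreal (if 0 \<le> v \<and> v \<le> x then f (x - v) * g v else 0) \<partial>lborel)
      = (\<integral>\<^sup>+ v. h v x \<partial>lborel)"
      by (simp flip: nn_integral_cmult)
  qed
  also have "\<dots> = (\<integral>\<^sup>+ v. \<integral>\<^sup>+ x. h v x \<partial>lborel \<partial>lborel)"
    by (intro lborel_pair.Fubini') measurable
  also have "\<dots> = (\<integral>\<^sup>+ v. ennreal (indicator {0..} v * (exp (- s * v) * g v)) * ?F \<partial>lborel)"
  proof (intro nn_integral_cong)
    fix v :: real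
    have shift: "(\<integral>\<^sup>+ x. ennreal (if v \<le> x then exp (- s * (x - v)) * f (x - v) else 0) \<partial>lborel) = ?F"
      using nn_integral_real_affine[where c = 1 and t = v and
          f = "\<lambda>x. ennreal (if v \<le> x then exp (- s * (x - v)) * f (x - v) else 0)"]
      by (auto intro!: nn_integral_cong split: split_indicator)
    have "0 \<le> v \<Longrightarrow> h v x = ennreal (exp (- s * v) * g v) *
        ennreal (if v \<le> x then exp (- s * (x - v)) * f (x - v) else 0)" for x
      using g_nonneg[of v] by (auto simp: h_def ennreal_mult'[symmetric] mult_ac)
    then show "(\<integral>\<^sup>+ x. h v x \<partial>lborel) = ennreal (indicator {0..} v * (exp (- s * v) * g v)) * ?F"
      by (cases "0 \<le> v") (simp_all add: h_def nn_integral_cmult shift)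
  qed
  also have "\<dots> = ?F * ?G"
    by (subst nn_integral_multc) (measurable, simp add: mult.commute)
  finally show ?thesis .
qed

lemma nn_laplace_convolution_integral:
  fixes f g :: "real \<Rightarrow> real"
  assumes [measurable]: "f \<in> borel_measurable borel" "g \<in> borel_measurable borel"
    and f_nonneg: "\<And>y. 0 \<le> y \<Longrightarrow> 0 \<le> f y" and g_nonneg: "\<And>y. 0 \<le> y \<Longrightarrow> 0 \<le> g y"
    and f_finite: "(\<integral>\<^sup>+ y. ennreal (indicator {0..} y * (exp (- s * y) * f y)) \<partial>lborel) < \<infinity>"
    and g_finite: "(\<integral>\<^sup>+ y. ennreal (indicator {0..} y * (exp (- s * y) * g y)) \<partial>lborel) < \<infinity>"
  shows "(\<integral>\<^sup>+ x. ennreal (indicator {0..} x * (exp (- s * x) *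
            (\<integral>v. indicator {0..x} v * (f (x - v) * g v) \<partial>lborel))) \<partial>lborel)
       = (\<integral>\<^sup>+ y. ennreal (indicator {0..} y * (exp (- s * y) * f y)) \<partial>lborel) *
         (\<integral>\<^sup>+ y. ennreal (indicator {0..} y * (exp (- s * y) * g y)) \<partial>lborel)"
    (is "_ = ?F * ?G")
proof -
  define K where "K x = (\<integral>\<^sup>+ v. ennreal (if 0 \<le> v \<and> v \<le> x then f (x - v) * g v else 0) \<partial>lborel)" for x
  have [measurable]: "K \<in> borel_measurable borel"
    unfolding K_def by measurable
  have K_integral: "(\<integral>v. indicator {0..x} v * (f (x - v) * g v) \<partial>lborel) = enn2real (K x)" for x
  proof -
    have "(\<integral>v. indicator {0..x} v * (f (x - v) * g v) \<partial>lborel)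
        = (\<integral>v. (if 0 \<le> v \<and> v \<le> x then f (x - v) * g v else 0) \<partial>lborel)"
      by (auto intro!: Bochner_Integration.integral_cong split: split_indicator)
    also have "\<dots> = enn2real (K x)"
      unfolding K_def by (intro integral_eq_nn_integral) (auto intro!: mult_nonneg_nonneg f_nonneg g_nonneg)
    finally show ?thesis .
  qed
  have conv: "(\<integral>\<^sup>+ x. ennreal (indicator {0..} x * exp (- s * x)) * K x \<partial>lborel) = ?F * ?G"
    unfolding K_def by (rule nn_laplace_convolution) (use f_nonneg g_nonneg in auto)
  with f_finite g_finite have "AE x in lborel. ennreal (indicator {0..} x * exp (- s * x)) * K x \<noteq> \<infinity>"
    by (intro nn_integral_PInf_AE) (auto simp: ennreal_mult_eq_top_iff)
  then have "(\<integral>\<^sup>+ x. ennreal (indicator {0..} x * (exp (- s * x) *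
            (\<integral>v. indicator {0..x} v * (f (x - v) * g v) \<partial>lborel))) \<partial>lborel)
      = (\<integral>\<^sup>+ x. ennreal (indicator {0..} x * exp (- s * x)) * K x \<partial>lborel)"
    by (intro nn_integral_cong_AE, eventually_elim)
       (auto simp: K_integral ennreal_mult' ennreal_mult_eq_top_iff less_top split: split_indicator)
  with conv show ?thesis
    by simp
qed

text \<open>By Fubini, both the Laplace transform of \<open>S[p]\<close> at \<open>s\<close> and the mean of the Laplace transform
  of \<open>p\<close> over \<open>[0,s]\<close>.\<close>

definition mean_laplace :: "(real \<Rightarrow> real) \<Rightarrow> real \<Rightarrow> ennreal" where
  "mean_laplace p s = (\<integral>\<^sup>+ u. ennreal (if 0 < u then p u * (1 - exp (- s * u)) / (s * u) else 0) \<partial>lborel)"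

lemma mean_laplace_le_1:
  assumes "prob_density_nonneg p" "0 < s"
  shows "mean_laplace p s \<le> 1"
proof -
  note [measurable] = prob_density_nonneg_measurable[OF assms(1)]
  note nonneg = prob_density_nonneg_nonneg[OF assms(1)]
  have "mean_laplace p s \<le> (\<integral>\<^sup>+ u. ennreal (indicator {0..} u * p u) \<partial>lborel)"
    unfolding mean_laplace_def
  proof (intro nn_integral_mono ennreal_leI)
    fix u :: real
    have "0 < u \<Longrightarrow> (1 - exp (- s * u)) / (s * u) \<le> 1"
      using assms(2) exp_ge_add_one_self[of "- (s * u)"] by (simp add: divide_simps)
    then have "0 < u \<Longrightarrow> p u * ((1 - exp (- s * u)) / (s * u)) \<le> p u * 1"
      using nonneg[of u] by (intro mult_left_mono) auto
    then show "(if 0 < u then p u * (1 - exp (- s * u)) / (s * u) else 0) \<le> indicator {0..} u * p u"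
      using nonneg[of u] by (auto split: split_indicator)
  qed
  also have "\<dots> = 1"
    by (rule prob_density_nonneg_nn_integral[OF assms(1)])
  finally show ?thesis .
qed

lemma nn_laplace_S_op:
  assumes "prob_density_nonneg p" "0 < s"
  shows "(\<integral>\<^sup>+ y. ennreal (indicator {0..} y * (exp (- s * y) * S_op p y)) \<partial>lborel) = mean_laplace p s"
proof -
  note [measurable] = prob_density_nonneg_measurable[OF assms(1)]
  note nonneg = prob_density_nonneg_nonneg[OF assms(1)]
  define h where "h y u = ennreal (if 0 < y \<and> y \<le> u then exp (- s * y) * (p u / u) else 0)" for y u
  have [measurable]: "case_prod h \<in> borel_measurable (borel \<Otimes>\<^sub>M borel)"
    unfolding h_def by measurable
  have "AE y in lborel. ennreal (indicator {0..} y * (exp (- s * y) * S_op p y)) = (\<integral>\<^sup>+ u. h y u \<partial>lborel)"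
    using AE_lborel_singleton[of 0]
  proof eventually_elim
    fix y :: real assume "y \<noteq> 0"
    show "ennreal (indicator {0..} y * (exp (- s * y) * S_op p y)) = (\<integral>\<^sup>+ u. h y u \<partial>lborel)"
    proof (cases "0 < y")
      case True
      let ?S = "\<integral>\<^sup>+ u. ennreal (if y \<le> u then p u / u else 0) \<partial>lborel"
      have "?S < \<infinity>"
        using nn_integral_S_op_le[OF assms(1) True] by (simp add: le_less_trans)
      then have "ennreal (indicator {0..} y * (exp (- s * y) * S_op p y)) = ennreal (exp (- s * y)) * ?S"
        using True nonneg by (simp add: S_op_eq_nn_integral ennreal_mult' less_top)
      also have "\<dots> = (\<integral>\<^sup>+ u. ennreal (exp (- s * y)) * ennreal (if y \<le> u then p u / u else 0) \<partial>lborel)"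
        by (simp add: nn_integral_cmult)
      also have "\<dots> = (\<integral>\<^sup>+ u. h y u \<partial>lborel)"
        using True by (intro nn_integral_cong) (simp add: h_def ennreal_mult'[symmetric])
      finally show ?thesis .
    qed (use \<open>y \<noteq> 0\<close> in \<open>simp add: h_def\<close>)
  qed
  then have "(\<integral>\<^sup>+ y. ennreal (indicator {0..} y * (exp (- s * y) * S_op p y)) \<partial>lborel)
      = (\<integral>\<^sup>+ y. \<integral>\<^sup>+ u. h y u \<partial>lborel \<partial>lborel)"
    by (rule nn_integral_cong_AE)
  also have "\<dots> = (\<integral>\<^sup>+ u. \<integral>\<^sup>+ y. h y u \<partial>lborel \<partial>lborel)"
    by (intro lborel_pair.Fubini') measurable
  also have "\<dots> = mean_laplace p s"
    unfolding mean_laplace_def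
  proof (intro nn_integral_cong)
    fix u :: real
    show "(\<integral>\<^sup>+ y. h y u \<partial>lborel) = ennreal (if 0 < u then p u * (1 - exp (- s * u)) / (s * u) else 0)"
    proof (cases "0 < u")
      case True
      have pu: "0 \<le> p u / u"
        using nonneg[of u] True by simp
      have "(\<integral>\<^sup>+ y. h y u \<partial>lborel)
          = (\<integral>\<^sup>+ y. ennreal (p u / u) * ennreal (indicator {0..u} y * exp (- s * y)) \<partial>lborel)"
        using AE_lborel_singleton[of 0]
        by (intro nn_integral_cong_AE, eventually_elim)
           (use pu in \<open>auto simp: h_def ennreal_mult'[symmetric] mult_ac split: split_indicator\<close>)
      also have "\<dots> = ennreal (p u / u) * ennreal ((1 - exp (- s * u)) / s)"
        using True assms(2) nn_integral_exp_atLeastAtMost[of s u] by (simp add: nn_integral_cmult)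
      also have "\<dots> = ennreal (p u * (1 - exp (- s * u)) / (s * u))"
        using pu by (simp add: ennreal_mult'[symmetric] mult_ac)
      finally show ?thesis
        using True by simp
    next
      case False
      then have "h y u = 0" for y
        by (simp add: h_def)
      with False show ?thesis
        by simp
    qed
  qed
  finally show ?thesis .
qed

lemma nn_integral_laplace_atLeastAtMost:
  assumes "prob_density_nonneg p" "0 < s"
  shows "(\<integral>\<^sup>+ t. ennreal (indicator {0..s} t * laplace p t) \<partial>lborel) = ennreal s * mean_laplace p s"
proof -
  note [measurable] = prob_density_nonneg_measurable[OF assms(1)]
  note nonneg = prob_density_nonneg_nonneg[OF assms(1)]
  define h where "h t u = ennreal (indicator {0..s} t * (indicator {0..} u * (exp (- t * u) * p u)))" for t u
  have [measurable]: "case_prod h \<in> borel_measurable (borel \<Otimes>\<^sub>M borel)"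
    unfolding h_def by measurable
  have "ennreal (indicator {0..s} t * laplace p t) = (\<integral>\<^sup>+ u. h t u \<partial>lborel)" for t
  proof (cases "t \<in> {0..s}")
    case True
    then have "(\<integral>\<^sup>+ u. ennreal (indicator {0..} u * (exp (- t * u) * p u)) \<partial>lborel) < \<infinity>"
      using nn_laplace_le_1[OF assms(1), of t] ennreal_one_less_top by (simp add: le_less_trans)
    with True show ?thesis
      by (simp add: h_def laplace_eq_nn_integral nonneg less_top)
  qed (simp add: h_def)
  then have "(\<integral>\<^sup>+ t. ennreal (indicator {0..s} t * laplace p t) \<partial>lborel)
      = (\<integral>\<^sup>+ t. \<integral>\<^sup>+ u. h t u \<partial>lborel \<partial>lborel)"
    by simp
  also have "\<dots> = (\<integral>\<^sup>+ u. \<integral>\<^sup>+ t. h t u \<partial>lborel \<partial>lborel)"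
    by (intro lborel_pair.Fubini') measurable
  also have "\<dots> = (\<integral>\<^sup>+ u. ennreal s * ennreal (if 0 < u then p u * (1 - exp (- s * u)) / (s * u) else 0) \<partial>lborel)"
  proof (intro nn_integral_cong_AE)
    show "AE u in lborel. (\<integral>\<^sup>+ t. h t u \<partial>lborel)
        = ennreal s * ennreal (if 0 < u then p u * (1 - exp (- s * u)) / (s * u) else 0)"
      using AE_lborel_singleton[of 0]
    proof eventually_elim
      fix u :: real assume "u \<noteq> 0"
      show "(\<integral>\<^sup>+ t. h t u \<partial>lborel)
          = ennreal s * ennreal (if 0 < u then p u * (1 - exp (- s * u)) / (s * u) else 0)"
      proof (cases "0 < u")
        case True
        have "(\<integral>\<^sup>+ t. h t u \<partial>lborel) = (\<integral>\<^sup>+ t. ennreal (p u) * ennreal (indicator {0..s} t * exp (- u * t)) \<partial>lborel)"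
          using True nonneg[of u]
          by (intro nn_integral_cong) (auto simp: h_def ennreal_mult'[symmetric] mult_ac split: split_indicator)
        also have "\<dots> = ennreal (p u) * ennreal ((1 - exp (- u * s)) / u)"
          using True assms(2) nn_integral_exp_atLeastAtMost[of u s] by (simp add: nn_integral_cmult)
        also have "\<dots> = ennreal s * ennreal (p u * (1 - exp (- s * u)) / (s * u))"
          using True nonneg[of u] assms(2) by (simp add: ennreal_mult'[symmetric] mult_ac)
        finally show ?thesis
          using True by simp
      qed (use \<open>u \<noteq> 0\<close> in \<open>simp add: h_def\<close>)
    qed
  qed
  also have "\<dots> = ennreal s * mean_laplace p s"
    unfolding mean_laplace_def by (rule nn_integral_cmult) measurable
  finally show ?thesis .
qed

lemma laplace_S_op:
  assumes "prob_density_nonneg p" "0 < s"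
  shows "laplace (S_op p) s = enn2real (mean_laplace p s)"
  using laplace_eq_nn_integral[OF S_op_measurable[OF prob_density_nonneg_measurable[OF assms(1)]]
      S_op_nonneg[OF assms(1)], of s] nn_laplace_S_op[OF assms]
  by simp

lemma laplace_S_op_le_1:
  assumes "prob_density_nonneg p" "0 < s"
  shows "laplace (S_op p) s \<le> 1"
  using mean_laplace_le_1[OF assms] by (simp add: laplace_S_op[OF assms] enn2real_leI)

lemma laplace_T_op:
  assumes "prob_density_nonneg p" "0 < s"
  shows "laplace (T_op p) s = (laplace (S_op p) s)\<^sup>2"
proof -
  note [measurable] = prob_density_nonneg_measurable[OF assms(1)]
  note S_nonneg = S_op_nonneg[OF assms(1)]
  have T_eq: "T_op p x = (\<integral>v. indicator {0..x} v * (S_op p (x - v) * S_op p v) \<partial>lborel)" for x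
    by (simp add: T_op_def set_lebesgue_integral_def)
  have "0 \<le> T_op p x" for x
    unfolding T_eq by (intro Bochner_Integration.integral_nonneg) (simp add: S_nonneg split: split_indicator)
  then have "laplace (T_op p) s
      = enn2real (\<integral>\<^sup>+ x. ennreal (indicator {0..} x * (exp (- s * x) * T_op p x)) \<partial>lborel)"
    by (simp add: laplace_eq_nn_integral)
  also have "\<dots> = enn2real (mean_laplace p s * mean_laplace p s)"
    using mean_laplace_le_1[OF assms] ennreal_one_less_top
    unfolding T_eq nn_laplace_S_op[OF assms, symmetric]
    by (subst nn_laplace_convolution_integral) (auto simp: S_nonneg nn_laplace_S_op[OF assms] le_less_trans)
  also have "\<dots> = (laplace (S_op p) s)\<^sup>2"
    by (simp add: laplace_S_op[OF assms] enn2real_mult power2_eq_square)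
  finally show ?thesis .
qed

lemma integral_laplace_atLeastAtMost:
  assumes "prob_density_nonneg p" "0 < s"
  shows integrable_laplace_atLeastAtMost: "integrable lborel (\<lambda>t. indicator {0..s} t * laplace p t)"
    and "(\<integral>t. indicator {0..s} t * laplace p t \<partial>lborel) = s * laplace (S_op p) s"
proof -
  note [measurable] = prob_density_nonneg_measurable[OF assms(1)]
  have [measurable]: "laplace p \<in> borel_measurable borel"
  proof -
    have "laplace p = (\<lambda>t. \<integral>x. (if 0 \<le> x then exp (- t * x) * p x else 0) \<partial>lborel)"
      by (auto simp: laplace_def set_lebesgue_integral_def fun_eq_iff
          intro!: Bochner_Integration.integral_cong split: split_indicator)
    then show ?thesis
      by simp
  qed
  have nonneg: "0 \<le> indicator {0..s} t * laplace p t" for t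
    using laplace_nonneg[OF prob_density_nonnegD(1,2)[OF assms(1)]] by simp
  have "mean_laplace p s < \<infinity>"
    using mean_laplace_le_1[OF assms] ennreal_one_less_top by (simp add: le_less_trans)
  then have finite: "ennreal s * mean_laplace p s < \<infinity>"
    by (simp add: ennreal_mult_less_top)
  then show int: "integrable lborel (\<lambda>t. indicator {0..s} t * laplace p t)"
    using nonneg nn_integral_laplace_atLeastAtMost[OF assms] by (intro integrableI_nonneg) auto
  have "ennreal (\<integral>t. indicator {0..s} t * laplace p t \<partial>lborel) = ennreal s * mean_laplace p s"
    using nn_integral_eq_integral[OF int] nonneg nn_integral_laplace_atLeastAtMost[OF assms] by simp
  also have "\<dots> = ennreal (s * laplace (S_op p) s)"
    using \<open>mean_laplace p s < \<infinity>\<close> assms(2) by (simp add: laplace_S_op[OF assms] ennreal_mult' less_top)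
  finally show "(\<integral>t. indicator {0..s} t * laplace p t \<partial>lborel) = s * laplace (S_op p) s"
    using assms(2) nonneg laplace_nonneg[OF S_op_measurable S_op_nonneg[OF assms(1)]]
    by (subst (asm) ennreal_inj) (auto intro!: Bochner_Integration.integral_nonneg)
qed

lemma abs_square_diff_le:
  fixes x y :: real
  assumes "0 \<le> x" "x \<le> 1" "0 \<le> y" "y \<le> 1"
  shows "\<bar>x\<^sup>2 - y\<^sup>2\<bar> \<le> 2 * \<bar>x - y\<bar>"
proof -
  have "x\<^sup>2 - y\<^sup>2 = (x - y) * (x + y)"
    by (simp add: power2_eq_square algebra_simps)
  then have "\<bar>x\<^sup>2 - y\<^sup>2\<bar> = \<bar>x - y\<bar> * (x + y)"
    using assms by (simp add: abs_mult)
  also have "\<dots> \<le> \<bar>x - y\<bar> * 2"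
    using assms by (intro mult_left_mono) auto
  finally show ?thesis
    by simp
qed

lemma laplace_S_op_diff_le:
  assumes p: "prob_density_nonneg p" and q: "prob_density_nonneg q" and "0 < s" "0 < \<alpha>"
    and bound: "\<And>t. 0 < t \<Longrightarrow> \<bar>laplace p t - laplace q t\<bar> \<le> D * t powr \<alpha>"
  shows "\<bar>laplace (S_op p) s - laplace (S_op q) s\<bar> \<le> D * s powr \<alpha> / (\<alpha> + 1)"
proof -
  let ?Lp = "\<lambda>t. indicator {0..s} t * laplace p t" and ?Lq = "\<lambda>t. indicator {0..s} t * laplace q t"
  have "s * (laplace (S_op p) s - laplace (S_op q) s) = (\<integral>t. ?Lp t - ?Lq t \<partial>lborel)"
    using integral_laplace_atLeastAtMost[OF p \<open>0 < s\<close>] integral_laplace_atLeastAtMost[OF q \<open>0 < s\<close>]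
    by (simp add: right_diff_distrib)
  then have "s * \<bar>laplace (S_op p) s - laplace (S_op q) s\<bar> = \<bar>(\<integral>t. ?Lp t - ?Lq t \<partial>lborel)\<bar>"
    using \<open>0 < s\<close> by (metis abs_mult abs_of_pos)
  also have "\<dots> \<le> (\<integral>t. D * (indicator {0..s} t * t powr \<alpha>) \<partial>lborel)"
  proof (rule integral_abs_bound_integral)
    fix t :: real
    show "\<bar>?Lp t - ?Lq t\<bar> \<le> D * (indicator {0..s} t * t powr \<alpha>)"
      using bound[of t] laplace_at_0[OF p] laplace_at_0[OF q]
      by (cases "t = 0") (auto split: split_indicator)
  qed (use integrable_laplace_atLeastAtMost[OF p \<open>0 < s\<close>] integrable_laplace_atLeastAtMost[OF q \<open>0 < s\<close>]
      integrable_powr_atLeastAtMost[OF \<open>0 < \<alpha>\<close>, of s] \<open>0 < s\<close> in auto)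
  also have "\<dots> = s * (D * s powr \<alpha> / (\<alpha> + 1))"
    using \<open>0 < s\<close> integral_powr_atLeastAtMost(2)[OF \<open>0 < \<alpha>\<close>, of s] by (simp add: powr_add)
  finally show ?thesis
    using \<open>0 < s\<close> mult_le_cancel_left_pos by blast
qed

lemma laplace_T_op_diff_le:
  assumes p: "prob_density_nonneg p" and q: "prob_density_nonneg q" and "0 < s" "0 < \<alpha>"
    and "\<And>t. 0 < t \<Longrightarrow> \<bar>laplace p t - laplace q t\<bar> \<le> D * t powr \<alpha>"
  shows "\<bar>laplace (T_op p) s - laplace (T_op q) s\<bar> \<le> 2 / (\<alpha> + 1) * D * s powr \<alpha>"
proof -
  have "\<bar>laplace (T_op p) s - laplace (T_op q) s\<bar> \<le> 2 * \<bar>laplace (S_op p) s - laplace (S_op q) s\<bar>"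
    unfolding laplace_T_op[OF p \<open>0 < s\<close>] laplace_T_op[OF q \<open>0 < s\<close>]
    using p q \<open>0 < s\<close>
    by (intro abs_square_diff_le laplace_S_op_le_1 laplace_nonneg S_op_measurable S_op_nonneg
        prob_density_nonneg_measurable)
  also have "\<dots> \<le> 2 * (D * s powr \<alpha> / (\<alpha> + 1))"
    using laplace_S_op_diff_le[OF assms] by simp
  finally show ?thesis
    by simp
qed

lemma laplace_diff_le_d_alpha:
  assumes "0 < t"
  shows "ereal (\<bar>laplace p t - laplace q t\<bar> / t powr \<alpha>) \<le> d_alpha \<alpha> p q"
  unfolding d_alpha_def using assms by (intro SUP_upper) simp

theorem lemma3:
  fixes \<alpha> w :: real and p q :: "real \<Rightarrow> real"
  assumes "1 < \<alpha>" "\<alpha> < 2" "0 < w"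
    and "p \<in> P_class \<alpha> w" "q \<in> P_class \<alpha> w"
  shows "d_alpha \<alpha> (T_op p) (T_op q) \<le> ereal (2 / (\<alpha> + 1)) * d_alpha \<alpha> p q"
proof (cases "d_alpha \<alpha> p q")
  case (real D)
  have p: "prob_density_nonneg p" and q: "prob_density_nonneg q"
    using assms(4,5) by (auto simp: P_class_def)
  have bound: "\<bar>laplace p t - laplace q t\<bar> \<le> D * t powr \<alpha>" if "0 < t" for t
    using laplace_diff_le_d_alpha[OF that, of p q \<alpha>] real that by (simp add: divide_le_eq)
  have "\<bar>laplace (T_op p) s - laplace (T_op q) s\<bar> / s powr \<alpha> \<le> 2 / (\<alpha> + 1) * D" if "0 < s" for s
    using laplace_T_op_diff_le[OF p q that _ bound] assms(1) that by (simp add: divide_le_eq)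
  then show ?thesis
    unfolding d_alpha_def[of \<alpha> "T_op p"] real by (intro SUP_least) simp
next
  case PInf
  then show ?thesis
    using assms(1) by simp
next
  case MInf
  then show ?thesis
    using laplace_diff_le_d_alpha[of 1 p q \<alpha>] by simp
qed

end
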